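(* Let $G$ be a finite group with $\pi_e(G)\subseteq\{1,2,3,4,6\}$ that has precisely three cyclic subgroups of order $6$. If there exist two cyclic subgroups of order $6$ of $G$ whose intersection has order $3$, then the intersection of any two distinct cyclic subgroups of order $6$ of $G$ has order $3$.
   Context: For a finite group $G$, $\pi_e(G)$ denotes the set of orders of elements of $G$. *)

theory Defs
  imports "HOL-Algebra.Algebra"
begin

definition elem_orders :: "('a, 'b) monoid_scheme \<Rightarrow> nat set" where
  "elem_orders G = (\<lambda>x. group.ord G x) ` carrier G"

definition cyclic_subgroups_of_order :: "('a, 'b) monoid_scheme \<Rightarrow> nat \<Rightarrow> 'a set set" where
  "cyclic_subgroups_of_order G n =
     {H. (\<exists>x\<in>carrier G. H = generate G {x}) \<and> card H = n}"

end

theory Submission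
  imports Defs
begin

(* The intersection of the two given subgroups has prime order 3, so it contains an element a
   of order 3. A cyclic subgroup of order 6 containing a is generated by a v for an involution v
   commuting with a, and v is its only involution. The involutions s and t of the two given
   subgroups are therefore distinct and centralise a, and so does a third involution u: s t if
   s and t commute, the conjugate s t s otherwise. The subgroups generated by a s, a t and a u
   are three distinct cyclic subgroups of order 6, hence all of them, and each contains a.
   Finally, two distinct subgroups of order 6 sharing an element of order 3 meet in a proper
   subgroup whose order divides 6 and is divisible by 3. *)

(* x [^] k is an involution iff ord x divides 2 k but not k; hence a cyclic group has at most
   one involution. *)
lemma int_dvd_diff_if_dvd_double_not_dvd:
  fixes n k j :: int
  assumes "n dvd 2 * k" "\<not> n dvd k" "n dvd 2 * j" "\<not> n dvd j"
  shows "n dvd j - k"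
proof -
  have odd_quotient: "odd q" if "2 * m = n * q" "\<not> n dvd m" for m q :: int
  proof
    assume "even q"
    then have "m = n * (q div 2)" using that(1) by auto
    with that(2) show False by simp
  qed
  obtain q where q: "2 * k = n * q" using assms(1) by blast
  obtain r where r: "2 * j = n * r" using assms(3) by blast
  have "even (r - q)" using odd_quotient q r assms(2,4) by simp
  then obtain d where "r - q = 2 * d" by blast
  then have "2 * (j - k) = 2 * (n * d)" using q r by (simp add: algebra_simps)
  then have "j - k = n * d" by (metis mult_cancel_left zero_neq_numeral)
  then show ?thesis by simp
qed

lemma nat_dvd_6_cases: "(n::nat) dvd 6 \<Longrightarrow> n \<in> {1, 2, 3, 6}"
proof -
  assume h: "n dvd 6"
  then have "n \<le> 6" by (simp add: dvd_imp_le)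
  then have "n \<in> {0, 1, 2, 3, 4, 5, 6}" by auto
  then show ?thesis using h by auto
qed

context group begin

lemma card_subgroup_dvd_card:
  assumes "subgroup I G" "subgroup J G" "I \<subseteq> J"
  shows "card I dvd card J"
proof -
  have "card (rcosets\<^bsub>G\<lparr>carrier := J\<rparr>\<^esub> I) * card I = order (G\<lparr>carrier := J\<rparr>)"
    using group.lagrange[OF subgroup_imp_group[OF assms(2)] subgroup_incl[OF assms]] .
  then have "card J = card (rcosets\<^bsub>G\<lparr>carrier := J\<rparr>\<^esub> I) * card I" by (simp add: order_def)
  then show ?thesis by simp
qed

lemma ord_dvd_card_subgroup:
  assumes "subgroup H G" "x \<in> H"
  shows "ord x dvd card H"
proof -
  have x: "x \<in> carrier G" using assms subgroup.subset by blast
  have "generate G {x} \<subseteq> H" using generate_subgroup_incl assms by simp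
  then have "card (generate G {x}) dvd card H"
    using card_subgroup_dvd_card generate_is_subgroup x assms(1) by simp
  then show ?thesis using generate_pow_card[OF x] by simp
qed

lemma nat_pow_in_generate_singleton:
  assumes "x \<in> carrier G"
  shows "x [^] (n::nat) \<in> generate G {x}"
proof -
  have "x [^] int n \<in> generate G {x}" unfolding generate_pow[OF assms] by blast
  then show ?thesis by (simp add: int_pow_int)
qed

lemma generate_singleton_m_comm:
  assumes "x \<in> carrier G" "a \<in> generate G {x}" "b \<in> generate G {x}"
  shows "a \<otimes> b = b \<otimes> a"
proof -
  obtain i :: int where a: "a = x [^] i" using assms(2) generate_pow[OF assms(1)] by auto
  obtain j :: int where b: "b = x [^] j" using assms(3) generate_pow[OF assms(1)] by auto
  have "a \<otimes> b = x [^] (i + j)" "b \<otimes> a = x [^] (j + i)"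
    unfolding a b by (simp_all add: int_pow_mult[OF assms(1)])
  then show ?thesis by (simp add: add.commute)
qed

lemma ord_eq_2_iff:
  assumes "v \<in> carrier G"
  shows "ord v = 2 \<longleftrightarrow> v \<otimes> v = \<one> \<and> v \<noteq> \<one>"
proof -
  have "v \<otimes> v = v [^] (2::nat)" using assms by (simp add: numeral_2_eq_2)
  then have "v \<otimes> v = \<one> \<longleftrightarrow> ord v dvd 2" using pow_eq_id[OF assms] by simp
  moreover have "v \<noteq> \<one> \<longleftrightarrow> ord v \<noteq> 1" using ord_eq_1[OF assms] by simp
  moreover have "ord v dvd 2 \<and> ord v \<noteq> 1 \<longleftrightarrow> ord v = 2"
  proof -
    have "ord v dvd 2 \<Longrightarrow> ord v \<in> {0, 1, 2}" using dvd_imp_le[of "ord v" 2] by auto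
    then show ?thesis by auto
  qed
  ultimately show ?thesis by blast
qed

lemma generate_singleton_ord_2_unique:
  assumes x: "x \<in> carrier G" and "v \<in> generate G {x}" "w \<in> generate G {x}"
    and "ord v = 2" "ord w = 2"
  shows "v = w"
proof -
  have power_of_ord_2: "int (ord x) dvd 2 * k" "\<not> int (ord x) dvd k"
    if "ord (x [^] k) = 2" for k :: int
  proof -
    have xk: "x [^] k \<in> carrier G" using x by simp
    have "x [^] (2 * k) = x [^] k \<otimes> x [^] k"
      by (simp only: mult_2 int_pow_mult[OF x])
    also have "\<dots> = \<one>" using that ord_eq_2_iff[OF xk] by blast
    finally show "int (ord x) dvd 2 * k" using int_pow_eq_id[OF x] by blast
    show "\<not> int (ord x) dvd k" using that ord_eq_2_iff[OF xk] int_pow_eq_id[OF x] by blast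
  qed
  obtain k :: int where v: "v = x [^] k" using assms(2) generate_pow[OF x] by auto
  obtain j :: int where w: "w = x [^] j" using assms(3) generate_pow[OF x] by auto
  have k: "ord (x [^] k) = 2" and j: "ord (x [^] j) = 2" using assms(4,5) unfolding v w .
  have "int (ord x) dvd j - k"
    using int_dvd_diff_if_dvd_double_not_dvd[OF power_of_ord_2(1,2)[OF k] power_of_ord_2(1,2)[OF j]] .
  then show ?thesis unfolding v w int_pow_eq[OF x] .
qed

lemma commute_m_mult:
  assumes "a \<in> carrier G" "x \<in> carrier G" "y \<in> carrier G"
    and "a \<otimes> x = x \<otimes> a" "a \<otimes> y = y \<otimes> a"
  shows "a \<otimes> (x \<otimes> y) = (x \<otimes> y) \<otimes> a"
proof -
  have "a \<otimes> (x \<otimes> y) = x \<otimes> (a \<otimes> y)" using assms by (metis m_assoc)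
  also have "\<dots> = (x \<otimes> y) \<otimes> a" using assms by (simp add: m_assoc)
  finally show ?thesis .
qed

lemma self_inverse_cancel:
  assumes "v \<in> carrier G" "x \<in> carrier G" "v \<otimes> v = \<one>"
  shows "v \<otimes> (v \<otimes> x) = x"
  using assms by (simp flip: m_assoc)

lemma ord_2_mult_commuting:
  assumes s: "s \<in> carrier G" and t: "t \<in> carrier G"
    and "ord s = 2" "ord t = 2" "s \<noteq> t" "s \<otimes> t = t \<otimes> s"
  shows "ord (s \<otimes> t) = 2" "s \<otimes> t \<noteq> s" "s \<otimes> t \<noteq> t"
proof -
  have ss: "s \<otimes> s = \<one>" "s \<noteq> \<one>" and tt: "t \<otimes> t = \<one>" "t \<noteq> \<one>"
    using assms(3,4) ord_eq_2_iff[OF s] ord_eq_2_iff[OF t] by simp_all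
  have "s \<otimes> t \<otimes> (s \<otimes> t) = s \<otimes> (t \<otimes> s) \<otimes> t" using s t by (simp add: m_assoc)
  also have "\<dots> = s \<otimes> (s \<otimes> t) \<otimes> t" using \<open>s \<otimes> t = t \<otimes> s\<close> by simp
  also have "\<dots> = \<one>" using s t ss tt by (simp flip: m_assoc)
  finally have "s \<otimes> t \<otimes> (s \<otimes> t) = \<one>" .
  moreover have "s \<otimes> t \<noteq> \<one>"
  proof
    assume "s \<otimes> t = \<one>"
    then have "t = s" using self_inverse_cancel[OF s t ss(1)] s by simp
    with \<open>s \<noteq> t\<close> show False by simp
  qed
  ultimately show "ord (s \<otimes> t) = 2" using ord_eq_2_iff s t by simp
  show "s \<otimes> t \<noteq> s" "s \<otimes> t \<noteq> t" using s t ss tt by simp_all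
qed

lemma ord_2_conjugate:
  assumes s: "s \<in> carrier G" and t: "t \<in> carrier G"
    and "ord s = 2" "ord t = 2" "s \<otimes> t \<noteq> t \<otimes> s"
  shows "ord (s \<otimes> t \<otimes> s) = 2" "s \<otimes> t \<otimes> s \<noteq> s" "s \<otimes> t \<otimes> s \<noteq> t"
proof -
  have ss: "s \<otimes> s = \<one>" and tt: "t \<otimes> t = \<one>" "t \<noteq> \<one>"
    using assms(3,4) ord_eq_2_iff[OF s] ord_eq_2_iff[OF t] by simp_all
  have unconj: "s \<otimes> (s \<otimes> t \<otimes> s) \<otimes> s = t"
    using s t ss self_inverse_cancel by (simp add: m_assoc)
  have "s \<otimes> t \<otimes> s \<otimes> (s \<otimes> t \<otimes> s) = \<one>"
    using s t ss tt self_inverse_cancel by (simp add: m_assoc)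
  moreover have "s \<otimes> t \<otimes> s \<noteq> \<one>" using unconj s ss tt(2) by force
  ultimately show "ord (s \<otimes> t \<otimes> s) = 2" using ord_eq_2_iff s t by simp
  show "s \<otimes> t \<otimes> s \<noteq> s"
  proof
    assume "s \<otimes> t \<otimes> s = s"
    then have "t = s" using unconj s ss by (simp add: m_assoc)
    then show False using assms(5) by simp
  qed
  show "s \<otimes> t \<otimes> s \<noteq> t"
  proof
    assume "s \<otimes> t \<otimes> s = t"
    have "s \<otimes> t = s \<otimes> t \<otimes> s \<otimes> s" using s t ss by (simp add: m_assoc)
    also have "\<dots> = t \<otimes> s" using \<open>s \<otimes> t \<otimes> s = t\<close> by simp
    finally show False using assms(5) by simp
  qed
qed

lemma exists_third_ord_2_commuting:
  assumes a: "a \<in> carrier G" and s: "s \<in> carrier G" and t: "t \<in> carrier G"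
    and "ord s = 2" "ord t = 2" "s \<noteq> t" and as: "a \<otimes> s = s \<otimes> a" and at: "a \<otimes> t = t \<otimes> a"
  obtains u where "u \<in> carrier G" "ord u = 2" "a \<otimes> u = u \<otimes> a" "u \<noteq> s" "u \<noteq> t"
proof (cases "s \<otimes> t = t \<otimes> s")
  case True
  show ?thesis
  proof (rule that)
    show "s \<otimes> t \<in> carrier G" using s t by simp
    show "ord (s \<otimes> t) = 2" "s \<otimes> t \<noteq> s" "s \<otimes> t \<noteq> t"
      using ord_2_mult_commuting[OF s t assms(4-6) True] by simp_all
    show "a \<otimes> (s \<otimes> t) = s \<otimes> t \<otimes> a" using commute_m_mult[OF a s t as at] .
  qed
next
  case False
  show ?thesis
  proof (rule that)
    show "s \<otimes> t \<otimes> s \<in> carrier G" using s t by simp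
    show "ord (s \<otimes> t \<otimes> s) = 2" "s \<otimes> t \<otimes> s \<noteq> s" "s \<otimes> t \<otimes> s \<noteq> t"
      using ord_2_conjugate[OF s t assms(4,5) False] by simp_all
    show "a \<otimes> (s \<otimes> t \<otimes> s) = s \<otimes> t \<otimes> s \<otimes> a"
      using commute_m_mult[OF a _ s _ as] commute_m_mult[OF a s t as at] s t by simp
  qed
qed

lemma generate_mult_ord_3_ord_2:
  assumes a: "a \<in> carrier G" and v: "v \<in> carrier G"
    and "ord a = 3" "ord v = 2" and comm: "a \<otimes> v = v \<otimes> a"
  shows "card (generate G {a \<otimes> v}) = 6" "a \<in> generate G {a \<otimes> v}" "v \<in> generate G {a \<otimes> v}"
proof -
  define g where "g = a \<otimes> v"
  have g: "g \<in> carrier G" using a v by (simp add: g_def)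
  have pow_g: "g [^] n = a [^] n \<otimes> v [^] n" for n :: nat
    unfolding g_def using pow_mult_distrib[OF comm a v] .
  have pow_a: "a [^] n = \<one> \<longleftrightarrow> 3 dvd n" for n :: nat using pow_eq_id[OF a] assms(3) by simp
  have pow_v: "v [^] n = \<one> \<longleftrightarrow> 2 dvd n" for n :: nat using pow_eq_id[OF v] assms(4) by simp
  have "a [^] (4::nat) = a [^] (3::nat) \<otimes> a [^] (1::nat)" using nat_pow_mult[OF a, of 3 1] by simp
  then have "g [^] (4::nat) = a" using pow_g[of 4] pow_a[of 3] pow_v[of 4] a by simp
  then show a_in: "a \<in> generate G {g}" using nat_pow_in_generate_singleton[OF g, of 4] by simp
  have "v [^] (3::nat) = v [^] (2::nat) \<otimes> v [^] (1::nat)" using nat_pow_mult[OF v, of 2 1] by simp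
  then have "g [^] (3::nat) = v" using pow_g[of 3] pow_a[of 3] pow_v[of 2] v by simp
  then show v_in: "v \<in> generate G {g}" using nat_pow_in_generate_singleton[OF g, of 3] by simp
  have sub: "subgroup (generate G {g}) G" using g generate_is_subgroup by simp
  have "card (generate G {g}) dvd 6"
    using ord_mul_divides[OF comm a v] assms(3,4) generate_pow_card[OF g] by (simp add: g_def)
  then have "card (generate G {g}) \<in> {1, 2, 3, 6}" by (rule nat_dvd_6_cases)
  moreover have "3 dvd card (generate G {g})" "2 dvd card (generate G {g})"
    using ord_dvd_card_subgroup[OF sub a_in] ord_dvd_card_subgroup[OF sub v_in] assms(3,4)
    by simp_all
  ultimately show "card (generate G {g}) = 6" by auto
qed

lemma generate_mult_ord_2_inj:
  assumes a: "a \<in> carrier G" and v: "v \<in> carrier G" and w: "w \<in> carrier G"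
    and "ord a = 3" "ord v = 2" "ord w = 2" "a \<otimes> v = v \<otimes> a" "a \<otimes> w = w \<otimes> a"
    and eq: "generate G {a \<otimes> v} = generate G {a \<otimes> w}"
  shows "v = w"
proof (rule generate_singleton_ord_2_unique)
  show "a \<otimes> v \<in> carrier G" using a v by simp
  show "v \<in> generate G {a \<otimes> v}" using generate_mult_ord_3_ord_2(3)[OF a v] assms(4,5,7) .
  show "w \<in> generate G {a \<otimes> v}"
    unfolding eq using generate_mult_ord_3_ord_2(3)[OF a w] assms(4,6,8) .
qed (use assms in simp_all)

lemma subgroup_of_prime_card_has_element_of_order:
  assumes "subgroup H G" "Factorial_Ring.prime (card H)"
  obtains a where "a \<in> H" "ord a = card H"
proof -
  have "H \<noteq> {\<one>}" using assms(2) by auto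
  then obtain a where a: "a \<in> H" "a \<noteq> \<one>" using subgroup.one_closed[OF assms(1)] by blast
  then have "ord a \<noteq> 1" using ord_eq_1 subgroup.subset[OF assms(1)] by blast
  moreover have "ord a dvd card H" using ord_dvd_card_subgroup[OF assms(1) a(1)] .
  ultimately have "ord a = card H" using assms(2) prime_nat_iff by blast
  with a(1) show ?thesis using that by blast
qed

lemma subgroup_of_cyclic_subgroups_of_order:
  "H \<in> cyclic_subgroups_of_order G n \<Longrightarrow> subgroup H G"
  unfolding cyclic_subgroups_of_order_def using generate_is_subgroup by auto

lemma cyclic_subgroup_of_order_6_eq_generate_mult:
  assumes M: "M \<in> cyclic_subgroups_of_order G 6" and "a \<in> M" "ord a = 3"
  obtains v where "v \<in> carrier G" "ord v = 2" "a \<otimes> v = v \<otimes> a" "M = generate G {a \<otimes> v}"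
proof -
  obtain x where x: "x \<in> carrier G" and M_eq: "M = generate G {x}" and "card M = 6"
    using M unfolding cyclic_subgroups_of_order_def by blast
  have "ord x = 6" using generate_pow_card[OF x] M_eq \<open>card M = 6\<close> by simp
  define v where "v = x [^] (3::nat)"
  have v: "v \<in> carrier G" "v \<in> M" using x nat_pow_in_generate_singleton M_eq by (simp_all add: v_def)
  have ord_v: "ord v = 2" using ord_pow[OF x, of 3] \<open>ord x = 6\<close> by (simp add: v_def)
  have a: "a \<in> carrier G"
    using \<open>a \<in> M\<close> subgroup.subset[OF subgroup_of_cyclic_subgroups_of_order[OF M]] by blast
  have comm: "a \<otimes> v = v \<otimes> a" using generate_singleton_m_comm[OF x] \<open>a \<in> M\<close> v M_eq by simp
  have "generate G {a \<otimes> v} \<subseteq> M"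
    using generate_subgroup_incl subgroup_of_cyclic_subgroups_of_order[OF M] subgroup.m_closed
      \<open>a \<in> M\<close> v(2) by (metis empty_subsetI insert_subset)
  moreover have "card (generate G {a \<otimes> v}) = card M"
    using generate_mult_ord_3_ord_2(1)[OF a v(1) \<open>ord a = 3\<close> ord_v comm] \<open>card M = 6\<close> by simp
  ultimately have "M = generate G {a \<otimes> v}"
    using card_subset_eq[of M] \<open>card M = 6\<close> by (metis card.infinite zero_neq_numeral)
  with v(1) ord_v comm show ?thesis using that by blast
qed

lemma card_inter_subgroups_of_order_6:
  assumes M: "subgroup M G" "card M = 6" and N: "subgroup N G" "card N = 6" and "M \<noteq> N"
    and "a \<in> M" "a \<in> N" "ord a = 3"
  shows "card (M \<inter> N) = 3"
proof -
  have MN: "subgroup (M \<inter> N) G" using subgroups_Inter_pair[OF M(1) N(1)] .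
  have "card (M \<inter> N) dvd 6" using card_subgroup_dvd_card[OF MN M(1)] M(2) by simp
  then have "card (M \<inter> N) \<in> {1, 2, 3, 6}" by (rule nat_dvd_6_cases)
  moreover have "3 dvd card (M \<inter> N)" using ord_dvd_card_subgroup[OF MN, of a] assms(6-8) by simp
  moreover have "card (M \<inter> N) \<noteq> 6"
  proof
    assume card_MN: "card (M \<inter> N) = 6"
    have "finite M" "finite N" using M(2) N(2) by (simp_all add: card_ge_0_finite)
    have "M \<inter> N = M" by (rule card_subset_eq[OF \<open>finite M\<close>]) (simp_all add: card_MN M(2))
    moreover have "M \<inter> N = N" by (rule card_subset_eq[OF \<open>finite N\<close>]) (simp_all add: card_MN N(2))
    ultimately show False using \<open>M \<noteq> N\<close> by simp
  qed
  ultimately show ?thesis by auto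
qed

lemma ord_3_element_in_all_cyclic_subgroups_of_order_6:
  assumes card_S: "card (cyclic_subgroups_of_order G 6) = 3"
    and H: "H \<in> cyclic_subgroups_of_order G 6" and K: "K \<in> cyclic_subgroups_of_order G 6"
    and "card (H \<inter> K) = 3"
  obtains a where "ord a = 3" "\<And>M. M \<in> cyclic_subgroups_of_order G 6 \<Longrightarrow> a \<in> M"
proof -
  let ?S = "cyclic_subgroups_of_order G 6"
  have HK: "subgroup (H \<inter> K) G"
    using subgroups_Inter_pair subgroup_of_cyclic_subgroups_of_order[OF H]
      subgroup_of_cyclic_subgroups_of_order[OF K] .
  moreover have "Factorial_Ring.prime (card (H \<inter> K))" using \<open>card (H \<inter> K) = 3\<close> by simp
  ultimately obtain a where "a \<in> H \<inter> K" "ord a = card (H \<inter> K)"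
    by (rule subgroup_of_prime_card_has_element_of_order)
  then have "a \<in> H" "a \<in> K" and ord_a: "ord a = 3" using \<open>card (H \<inter> K) = 3\<close> by simp_all
  have a: "a \<in> carrier G"
    using \<open>a \<in> H\<close> subgroup.subset[OF subgroup_of_cyclic_subgroups_of_order[OF H]] by blast
  obtain s where s: "s \<in> carrier G" "ord s = 2" "a \<otimes> s = s \<otimes> a"
    and H_eq: "H = generate G {a \<otimes> s}"
    using cyclic_subgroup_of_order_6_eq_generate_mult[OF H \<open>a \<in> H\<close> ord_a] by blast
  obtain t where t: "t \<in> carrier G" "ord t = 2" "a \<otimes> t = t \<otimes> a"
    and K_eq: "K = generate G {a \<otimes> t}"
    using cyclic_subgroup_of_order_6_eq_generate_mult[OF K \<open>a \<in> K\<close> ord_a] by blast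
  have "H \<noteq> K" using \<open>card (H \<inter> K) = 3\<close> H unfolding cyclic_subgroups_of_order_def by auto
  then have "s \<noteq> t" using H_eq K_eq by blast
  obtain u where u: "u \<in> carrier G" "ord u = 2" "a \<otimes> u = u \<otimes> a" and "u \<noteq> s" "u \<noteq> t"
    using exists_third_ord_2_commuting[OF a s(1) t(1) s(2) t(2) \<open>s \<noteq> t\<close> s(3) t(3)] by blast
  define L where "L = generate G {a \<otimes> u}"
  have "L \<in> ?S" "a \<in> L"
    using generate_mult_ord_3_ord_2[OF a u(1) ord_a u(2,3)] a u(1)
    unfolding L_def cyclic_subgroups_of_order_def by auto
  have "L \<noteq> H"
    using generate_mult_ord_2_inj[OF a u(1) s(1) ord_a u(2) s(2) u(3) s(3)] \<open>u \<noteq> s\<close>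
    unfolding H_eq L_def by blast
  have "L \<noteq> K"
    using generate_mult_ord_2_inj[OF a u(1) t(1) ord_a u(2) t(2) u(3) t(3)] \<open>u \<noteq> t\<close>
    unfolding K_eq L_def by blast
  have "{H, K, L} = ?S"
  proof (rule card_subset_eq)
    show "finite ?S" using card_S by (simp add: card_ge_0_finite)
    show "{H, K, L} \<subseteq> ?S" using H K \<open>L \<in> ?S\<close> by simp
    show "card {H, K, L} = card ?S" using \<open>H \<noteq> K\<close> \<open>L \<noteq> H\<close> \<open>L \<noteq> K\<close> card_S by auto
  qed
  then show ?thesis using that ord_a \<open>a \<in> H\<close> \<open>a \<in> K\<close> \<open>a \<in> L\<close> by blast
qed

end

theorem lemma3p2:
  fixes G :: "('a, 'b) monoid_scheme"
  assumes "group G"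
    and "finite (carrier G)"
    and "elem_orders G \<subseteq> {1, 2, 3, 4, 6}"
    and "card (cyclic_subgroups_of_order G 6) = 3"
    and "\<exists>H\<in>cyclic_subgroups_of_order G 6. \<exists>K\<in>cyclic_subgroups_of_order G 6.
           card (H \<inter> K) = 3"
  shows "\<forall>H\<in>cyclic_subgroups_of_order G 6. \<forall>K\<in>cyclic_subgroups_of_order G 6.
           H \<noteq> K \<longrightarrow> card (H \<inter> K) = 3"
proof (intro ballI impI)
  interpret group G by fact
  fix M N assume M: "M \<in> cyclic_subgroups_of_order G 6" and N: "N \<in> cyclic_subgroups_of_order G 6"
    and "M \<noteq> N"
  obtain a where "ord a = 3" and a_in: "\<And>C. C \<in> cyclic_subgroups_of_order G 6 \<Longrightarrow> a \<in> C"
    using assms(5) ord_3_element_in_all_cyclic_subgroups_of_order_6[OF assms(4)] by blast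
  show "card (M \<inter> N) = 3"
  proof (rule card_inter_subgroups_of_order_6)
    show "subgroup M G" "subgroup N G"
      using subgroup_of_cyclic_subgroups_of_order M N by simp_all
    show "card M = 6" "card N = 6" using M N unfolding cyclic_subgroups_of_order_def by simp_all
  qed (use \<open>M \<noteq> N\<close> \<open>ord a = 3\<close> a_in M N in simp_all)
qed

end
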